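(* Let $A_p\in C[0,\infty)$ be real-valued and consider the Maxwell--Bloch system on $\mathbb X=\mathbb R^2\times S^3$, \[ \dot A=B,\quad \dot B=-\Omega^2A-\sigma B+cj,\quad i\hbar\dot C_1=\hbar\omega_1C_1+iaC_2,\quad i\hbar\dot C_2=\hbar\omega_2C_2-iaC_1, \] with $j=2q\,\mathrm{Im}[\overline{C_1}C_2]$, $a(t)=\frac qc[A(t)+A_p(t)]$. Let $\dot Y(t)=F(Y(t),t)$, $t\ge0$, be the induced reduced dynamics on $\mathbb Y=\mathbb X/U(1)=\mathbb R^2\times S^2$. Then for every $Y_0\in\mathbb Y$ the reduced equation admits a unique global solution $Y(t)=(A(t),B(t),C_*(t))$, $t\ge0$, with $Y(0)=Y_0$.
   Context: Parameters: $\Omega,\sigma,c,\hbar,p>0$, real $\omega_2>\omega_1$, $\omega=\omega_2-\omega_1$, $q=\omega p$. Here $S^3=\{C=(C_1,C_2)\in\mathbb C^2:|C_1|^2+|C_2|^2=1\}$. The group $U(1)$ acts on $\mathbb X$ by $g(\theta)(A,B,C)=(A,B,e^{i\theta}C)$; this action commutes with the Maxwell--Bloch flow. The quotient $\mathbb Y=\mathbb X/U(1)$ is identified with $\mathbb R^2\times S^2$ via the map $\Pi(A,B,C)=(A,B,h(C))$, where $h:S^3\to S^2$ is the Hopf fibration, $C_*=h(C)$. The reduced dynamics $\dot Y=F(Y,t)$ is the time-dependent vector field on $\mathbb Y$ (smooth in $Y$, continuous in $t$) obtained by pushing forward the Maxwell--Bloch vector field under $\Pi$, so that $\Pi$ maps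 Maxwell--Bloch solutions to solutions of the reduced equation. *)

theory Defs
  imports "HOL-Analysis.Analysis"
begin

definition MB_space :: "(real \<times> real \<times> complex \<times> complex) set" where
  "MB_space = {(A, B, C1, C2). (cmod C1)^2 + (cmod C2)^2 = 1}"

definition Red_space :: "(real \<times> real \<times> real \<times> real \<times> real) set" where
  "Red_space = {(A, B, x, y, z). x^2 + y^2 + z^2 = 1}"

definition hopf :: "complex \<Rightarrow> complex \<Rightarrow> real \<times> real \<times> real" where
  "hopf C1 C2 = (2 * Re (cnj C1 * C2), 2 * Im (cnj C1 * C2), (cmod C1)^2 - (cmod C2)^2)"

definition Pi_map :: "real \<times> real \<times> complex \<times> complex \<Rightarrow> real \<times> real \<times> real \<times> real \<times> real" where
  "Pi_map X = (case X of (A, B, C1, C2) \<Rightarrow> (A, B, hopf C1 C2))"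

definition mb_field ::
  "real \<Rightarrow> real \<Rightarrow> real \<Rightarrow> real \<Rightarrow> real \<Rightarrow> real \<Rightarrow> real \<Rightarrow> (real \<Rightarrow> real) \<Rightarrow>
   real \<times> real \<times> complex \<times> complex \<Rightarrow> real \<Rightarrow> real \<times> real \<times> complex \<times> complex" where
  "mb_field Omega sig c hb p w1 w2 Ap X t =
     (case X of (A, B, C1, C2) \<Rightarrow>
       (let q = (w2 - w1) * p;
            j = 2 * q * Im (cnj C1 * C2);
            a = complex_of_real (q / c * (A + Ap t))
        in (B,
            - (Omega^2) * A - sig * B + c * j,
            (complex_of_real (hb * w1) * C1 + \<i> * a * C2) / (\<i> * complex_of_real hb),
            (complex_of_real (hb * w2) * C2 - \<i> * a * C1) / (\<i> * complex_of_real hb))))"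

definition is_pushforward ::
  "real \<Rightarrow> real \<Rightarrow> real \<Rightarrow> real \<Rightarrow> real \<Rightarrow> real \<Rightarrow> real \<Rightarrow> (real \<Rightarrow> real) \<Rightarrow>
   (real \<times> real \<times> real \<times> real \<times> real \<Rightarrow> real \<Rightarrow> real \<times> real \<times> real \<times> real \<times> real) \<Rightarrow> bool" where
  "is_pushforward Omega sig c hb p w1 w2 Ap F \<longleftrightarrow>
     (\<forall>X\<in>MB_space. \<forall>t\<ge>0. \<exists>D. (Pi_map has_derivative D) (at X) \<and>
         D (mb_field Omega sig c hb p w1 w2 Ap X t) = F (Pi_map X) t)"

definition reduced_solution ::
  "(real \<times> real \<times> real \<times> real \<times> real \<Rightarrow> real \<Rightarrow> real \<times> real \<times> real \<times> real \<times> real) \<Rightarrow>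
   (real \<Rightarrow> real \<times> real \<times> real \<times> real \<times> real) \<Rightarrow> real \<times> real \<times> real \<times> real \<times> real \<Rightarrow> bool" where
  "reduced_solution F Y Y0 \<longleftrightarrow> Y 0 = Y0 \<and>
     (\<forall>t\<ge>0. Y t \<in> Red_space \<and> (Y has_vector_derivative F (Y t) t) (at t within {0..}))"

end

theory Submission
  imports Defs
begin

(* In the coordinates (A, B, x, y, z) of Y = R^2 x S^2 the push-forward condition determines F:
   it is a polynomial field in which the Bloch vector (x, y, z) is rotated by a
   skew-symmetric matrix whose entries are omega and the coupling k(A, t) ~ A + A_p(t).
   Clamping A to [-R, R] inside k and retracting (x, y, z) radially onto the unit ball gives a
   globally Lipschitz field, which has a unique solution on every [0, T] by Picard-Lindeloef.
   Along it |(x, y, z)| is conserved and the energy Omega^2 A^2 + B^2 grows at most linearly,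
   its rate -2 sig B^2 + 2 c q B y being at most (c q)^2 / (2 sig); so for R chosen from Y_0
   and T the truncation is never active and we have a solution of the reduced equation.
   Two solutions on [0, T] are bounded, hence solve a common truncated equation and agree;
   the solutions on the intervals [0, T] then patch together to the global solution. *)

section \<open>Initial value problems\<close>

definition solves_ivp_on ::
  "('a::real_normed_vector \<Rightarrow> real \<Rightarrow> 'a) \<Rightarrow> 'a set \<Rightarrow> real set \<Rightarrow> 'a \<Rightarrow> (real \<Rightarrow> 'a) \<Rightarrow> bool" where
  "solves_ivp_on H S I y0 y \<longleftrightarrow>
     y 0 = y0 \<and> (\<forall>t\<in>I. y t \<in> S \<and> (y has_vector_derivative H (y t) t) (at t within I))"

lemma solves_ivp_on_mono:
  assumes "solves_ivp_on H S I y0 y" "J \<subseteq> I" "S \<subseteq> S'"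
  shows "solves_ivp_on H S' J y0 y"
  using assms by (auto simp: solves_ivp_on_def intro: has_vector_derivative_within_subset)

lemma solves_ivp_on_cong:
  assumes "\<And>t. t \<in> I \<Longrightarrow> H (y t) t = H' (y t) t"
  shows "solves_ivp_on H S I y0 y \<longleftrightarrow> solves_ivp_on H' S I y0 y"
  using assms by (auto simp: solves_ivp_on_def)

lemma solves_ivp_on_continuous_on:
  "solves_ivp_on H S I y0 y \<Longrightarrow> continuous_on I y"
  unfolding solves_ivp_on_def continuous_on_eq_continuous_within
  using has_vector_derivative_continuous by blast

lemma solves_ivp_on_integral_equation:
  fixes H :: "'a::banach \<Rightarrow> real \<Rightarrow> 'a"
  assumes "solves_ivp_on H S {0..T} y0 y" "t \<in> {0..T}"
  shows "y t = y0 + integral {0..t} (\<lambda>s. H (y s) s)"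
proof -
  have "((\<lambda>s. H (y s) s) has_integral (y t - y 0)) {0..t}"
  proof (rule fundamental_theorem_of_calculus[where f = y])
    fix s assume "s \<in> {0..t}"
    with assms have "(y has_vector_derivative H (y s) s) (at s within {0..T})"
      by (auto simp: solves_ivp_on_def)
    then show "(y has_vector_derivative H (y s) s) (at s within {0..t})"
      by (rule has_vector_derivative_within_subset) (use assms(2) in auto)
  qed (use assms(2) in auto)
  then show ?thesis
    using assms(1) by (simp add: integral_unique solves_ivp_on_def)
qed

lemma integral_equation_solves_ivp_on:
  fixes H :: "'a::banach \<Rightarrow> real \<Rightarrow> 'a"
  assumes "0 \<le> T" and y: "continuous_on {0..T} y" and Hy: "continuous_on {0..T} (\<lambda>s. H (y s) s)"
    and eq: "\<And>t. t \<in> {0..T} \<Longrightarrow> y t = y0 + integral {0..t} (\<lambda>s. H (y s) s)"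
  shows "solves_ivp_on H UNIV {0..T} y0 y"
  unfolding solves_ivp_on_def
proof (intro conjI ballI)
  show "y 0 = y0" using eq[of 0] \<open>0 \<le> T\<close> by simp
  fix t assume t: "t \<in> {0..T}"
  have "((\<lambda>t. y0 + integral {0..t} (\<lambda>s. H (y s) s)) has_vector_derivative H (y t) t)
      (at t within {0..T})"
    using integral_has_vector_derivative[OF Hy t] by (intro derivative_eq_intros) auto
  then show "(y has_vector_derivative H (y t) t) (at t within {0..T})"
    by (rule has_vector_derivative_transform[OF t, rotated]) (simp add: eq)
qed simp

lemma solves_ivp_on_mean_value:
  fixes \<Phi> :: "'a::real_normed_vector \<Rightarrow> real"
  assumes y: "solves_ivp_on H S {0..T} y0 y" and t: "t \<in> {0..T}"
    and \<Phi>: "\<And>u. (\<Phi> has_derivative D\<Phi> u) (at u)"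
  obtains s where "s \<in> {0..t}" "\<Phi> (y t) - \<Phi> y0 = D\<Phi> (y s) (H (y s) s) * t"
proof -
  have "((\<Phi> \<circ> y) has_derivative (\<lambda>h. h * D\<Phi> (y s) (H (y s) s))) (at s within {0..t})"
    if s: "s \<in> {0..t}" for s
  proof -
    have "(y has_vector_derivative H (y s) s) (at s within {0..T})"
      using y s t by (auto simp: solves_ivp_on_def)
    then have "(y has_vector_derivative H (y s) s) (at s within {0..t})"
      by (rule has_vector_derivative_within_subset) (use t in auto)
    then have "((\<Phi> \<circ> y) has_vector_derivative D\<Phi> (y s) (H (y s) s)) (at s within {0..t})"
      by (rule vector_derivative_diff_chain_within) (rule has_derivative_at_withinI[OF \<Phi>])
    then show ?thesis by (simp add: has_vector_derivative_def ac_simps)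
  qed
  then have "\<exists>s\<in>{0..t}. (\<Phi> \<circ> y) t - (\<Phi> \<circ> y) 0 = (t - 0) * D\<Phi> (y s) (H (y s) s)"
    using t by (intro mvt_very_simple[of 0 t "\<Phi> \<circ> y" "\<lambda>s h. h * D\<Phi> (y s) (H (y s) s)"]) auto
  then obtain s where "s \<in> {0..t}" "(\<Phi> \<circ> y) t - (\<Phi> \<circ> y) 0 = (t - 0) * D\<Phi> (y s) (H (y s) s)"
    by blast
  with y show ?thesis by (intro that) (auto simp: solves_ivp_on_def)
qed

lemma solves_ivp_on_half_line:
  assumes exists: "\<And>T. 0 \<le> T \<Longrightarrow> \<exists>y. solves_ivp_on H S {0..T} y0 y"
    and unique: "\<And>T y z t. solves_ivp_on H S {0..T} y0 y \<Longrightarrow> solves_ivp_on H S {0..T} y0 z \<Longrightarrow>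
      t \<in> {0..T} \<Longrightarrow> y t = z t"
  obtains y where "solves_ivp_on H S {0..} y0 y"
proof -
  obtain Y where Y: "\<And>T. 0 \<le> T \<Longrightarrow> solves_ivp_on H S {0..T} y0 (Y T)"
    using exists by metis
  define y where "y t = Y (t + 1) t" for t
  have y_eq: "y s = Y (t + 1) s" if "0 \<le> s" "s \<le> t + 1" for s t
  proof -
    have "solves_ivp_on H S {0..min (s + 1) (t + 1)} y0 (Y (s + 1))"
      "solves_ivp_on H S {0..min (s + 1) (t + 1)} y0 (Y (t + 1))"
      using Y[of "s + 1"] Y[of "t + 1"] that by (auto elim!: solves_ivp_on_mono)
    then show ?thesis unfolding y_def by (rule unique) (use that in auto)
  qed
  have "solves_ivp_on H S {0..} y0 y"
    unfolding solves_ivp_on_def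
  proof (intro conjI ballI)
    show "y 0 = y0" using Y[of 1] by (simp add: y_def solves_ivp_on_def)
    fix t :: real assume "t \<in> {0..}"
    then have t: "0 \<le> t" by simp
    have Yt: "Y (t + 1) t \<in> S \<and> (Y (t + 1) has_vector_derivative H (y t) t) (at t within {0..t + 1})"
      using Y[of "t + 1"] t by (auto simp: solves_ivp_on_def y_def)
    then show "y t \<in> S" by (simp add: y_def)
    have "at t within {0..t + 1} = at t within {0..}"
      by (rule at_within_nhd[where S = "{..<t + 1}"]) auto
    then have "(Y (t + 1) has_vector_derivative H (y t) t) (at t within {0..})"
      using Yt by simp
    then show "(y has_vector_derivative H (y t) t) (at t within {0..})"
      by (rule has_vector_derivative_transform_within[where d = 1])
        (use t in \<open>auto simp: dist_real_def intro!: y_eq[symmetric]\<close>)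
  qed
  then show ?thesis by (rule that)
qed

section \<open>Picard--Lindeloef for globally Lipschitz fields\<close>

lemma continuous_on_lipschitz_field:
  fixes H :: "'a::metric_space \<Rightarrow> real \<Rightarrow> 'b::metric_space"
  assumes lip: "\<And>t. t \<in> I \<Longrightarrow> L-lipschitz_on UNIV (\<lambda>u. H u t)"
    and cont: "\<And>u. continuous_on I (H u)" and u: "continuous_on I u"
  shows "continuous_on I (\<lambda>t. H (u t) t)"
  unfolding continuous_on_iff
proof (intro ballI allI impI)
  fix t and e :: real assume t: "t \<in> I" and e: "0 < e"
  have L: "0 \<le> L" using lip[OF t] by (rule lipschitz_on_nonneg)
  obtain d1 where d1: "0 < d1" "\<And>s. s \<in> I \<Longrightarrow> dist s t < d1 \<Longrightarrow> dist (H (u t) s) (H (u t) t) < e / 2"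
    using cont[of "u t"] t e unfolding continuous_on_iff by (metis half_gt_zero)
  obtain d2 where d2: "0 < d2" "\<And>s. s \<in> I \<Longrightarrow> dist s t < d2 \<Longrightarrow> dist (u s) (u t) < e / (2 * (L + 1))"
    using u t e L unfolding continuous_on_iff
    by (metis divide_pos_pos add_nonneg_pos zero_less_one mult_pos_pos zero_less_numeral)
  show "\<exists>d>0. \<forall>s\<in>I. dist s t < d \<longrightarrow> dist (H (u s) s) (H (u t) t) < e"
  proof (intro exI conjI ballI impI)
    show "0 < min d1 d2" using d1 d2 by simp
    fix s assume s: "s \<in> I" "dist s t < min d1 d2"
    have "dist (H (u s) s) (H (u t) s) \<le> L * dist (u s) (u t)"
      using lip[OF s(1)] by (rule lipschitz_onD) auto
    also have "\<dots> \<le> L * (e / (2 * (L + 1)))"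
      using d2(2)[OF s(1)] s(2) L by (intro mult_left_mono) auto
    also have "\<dots> < e / 2"
      using L e by (simp add: field_simps)
    finally show "dist (H (u s) s) (H (u t) t) < e"
      using d1(2)[OF s(1)] s(2) dist_triangle[of "H (u s) s" "H (u t) t" "H (u t) s"] by simp
  qed
qed

lemma has_integral_exp_linear:
  fixes K t :: real
  assumes "K \<noteq> 0" "0 \<le> t"
  shows "((\<lambda>s. exp (K * s)) has_integral (exp (K * t) - 1) / K) {0..t}"
proof -
  have "((\<lambda>s. exp (K * s)) has_integral (exp (K * t) / K - exp (K * 0) / K)) {0..t}"
    using assms by (intro fundamental_theorem_of_calculus)
      (auto intro!: derivative_eq_intros simp flip: has_real_derivative_iff_has_vector_derivative)
  then show ?thesis by (simp add: diff_divide_distrib)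
qed

text \<open>Bielecki's trick: conjugated with the weight \<open>exp (K * t)\<close>, the Picard operator
  \<open>y \<mapsto> y0 + integral {0..t} (\<lambda>s. H (y s) s)\<close> of an \<open>L\<close>-Lipschitz field contracts sup distances
  on \<open>[0, T]\<close> by the factor \<open>L / K\<close>, whatever the length of the interval.\<close>

definition weighted_picard_op ::
  "('a::banach \<Rightarrow> real \<Rightarrow> 'a) \<Rightarrow> real \<Rightarrow> 'a \<Rightarrow> (real \<Rightarrow> 'a) \<Rightarrow> real \<Rightarrow> 'a" where
  "weighted_picard_op H K y0 f t =
     exp (-(K * t)) *\<^sub>R (y0 + integral {0..t} (\<lambda>s. H (exp (K * s) *\<^sub>R f s) s))"

lemma continuous_on_weighted_picard_op:
  fixes H :: "'a::banach \<Rightarrow> real \<Rightarrow> 'a"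
  assumes lip: "\<And>t. t \<in> {0..T} \<Longrightarrow> L-lipschitz_on UNIV (\<lambda>u. H u t)"
    and cont: "\<And>u. continuous_on {0..T} (H u)" and f: "continuous_on {0..T} f"
  shows "continuous_on {0..T} (weighted_picard_op H K y0 f)"
proof -
  have "continuous_on {0..T} (\<lambda>s. H (exp (K * s) *\<^sub>R f s) s)"
    using lip cont by (rule continuous_on_lipschitz_field) (auto intro!: continuous_intros f)
  then show ?thesis
    unfolding weighted_picard_op_def[abs_def]
    by (intro continuous_intros indefinite_integral_continuous_1 integrable_continuous_real) auto
qed

lemma weighted_picard_op_contraction:
  fixes H :: "'a::banach \<Rightarrow> real \<Rightarrow> 'a"
  assumes lip: "\<And>t. t \<in> {0..T} \<Longrightarrow> L-lipschitz_on UNIV (\<lambda>u. H u t)"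
    and cont: "\<And>u. continuous_on {0..T} (H u)" and K: "0 < K" and t: "t \<in> {0..T}"
    and f: "continuous_on {0..T} f" and g: "continuous_on {0..T} g"
    and fg: "\<And>s. s \<in> {0..T} \<Longrightarrow> norm (f s - g s) \<le> D"
  shows "norm (weighted_picard_op H K y0 f t - weighted_picard_op H K y0 g t) \<le> L / K * D"
proof -
  define hf where "hf s = H (exp (K * s) *\<^sub>R f s) s" for s
  define hg where "hg s = H (exp (K * s) *\<^sub>R g s) s" for s
  have L: "0 \<le> L" using lip[OF t] by (rule lipschitz_on_nonneg)
  have D: "0 \<le> D" using order_trans[OF norm_ge_zero fg[OF t]] .
  have sub: "{0..t} \<subseteq> {0..T}" using t by auto
  have int: "hf integrable_on {0..t}" "hg integrable_on {0..t}"
    unfolding hf_def hg_def using f g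
    by (auto intro!: integrable_continuous_real continuous_on_subset[OF _ sub]
        continuous_on_lipschitz_field[OF lip cont] continuous_intros)
  have exp_int: "((\<lambda>s. L * D * exp (K * s)) has_integral L * D * ((exp (K * t) - 1) / K)) {0..t}"
    using has_integral_exp_linear[of K t] K t by (intro has_integral_mult_right) auto
  have "norm (integral {0..t} (\<lambda>s. hf s - hg s)) \<le> integral {0..t} (\<lambda>s. L * D * exp (K * s))"
  proof (rule integral_norm_bound_integral)
    fix s assume s: "s \<in> {0..t}"
    have "norm (hf s - hg s) \<le> L * norm (exp (K * s) *\<^sub>R f s - exp (K * s) *\<^sub>R g s)"
      unfolding hf_def hg_def using s t by (intro lipschitz_on_normD[OF lip]) auto
    also have "\<dots> = L * exp (K * s) * norm (f s - g s)"
      by (simp flip: scaleR_diff_right)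
    also have "\<dots> \<le> L * exp (K * s) * D"
      using fg[of s] s t L by (intro mult_left_mono) auto
    finally show "norm (hf s - hg s) \<le> L * D * exp (K * s)" by (simp add: ac_simps)
  qed (use int exp_int in \<open>auto intro: integrable_diff\<close>)
  also have "\<dots> = L * D * ((exp (K * t) - 1) / K)"
    using exp_int by (rule integral_unique)
  finally have bound: "norm (integral {0..t} (\<lambda>s. hf s - hg s)) \<le> L * D * ((exp (K * t) - 1) / K)" .
  have "weighted_picard_op H K y0 f t - weighted_picard_op H K y0 g t
      = exp (-(K * t)) *\<^sub>R integral {0..t} (\<lambda>s. hf s - hg s)"
    unfolding weighted_picard_op_def hf_def[symmetric] hg_def[symmetric] integral_diff[OF int]
    by (simp add: algebra_simps)
  then have "norm (weighted_picard_op H K y0 f t - weighted_picard_op H K y0 g t)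
      = exp (-(K * t)) * norm (integral {0..t} (\<lambda>s. hf s - hg s))"
    by simp
  also have "\<dots> \<le> exp (-(K * t)) * (L * D * ((exp (K * t) - 1) / K))"
    using bound by (intro mult_left_mono) auto
  also have "\<dots> = L / K * D * (1 - exp (-(K * t)))"
    by (simp add: field_simps exp_minus)
  also have "\<dots> \<le> L / K * D * 1"
    using K L D t by (intro mult_left_mono) auto
  finally show ?thesis by simp
qed

lemma clamp_real_in_interval: "a \<le> b \<Longrightarrow> clamp a b (x::real) \<in> {a..b}"
  using clamp_in_interval[of a b x] by auto

lemma bcontfun_clamp_extension:
  fixes P :: "(real \<Rightarrow> 'a::metric_space) \<Rightarrow> real \<Rightarrow> 'a"
  assumes "\<And>f::real \<Rightarrow>\<^sub>C 'a. continuous_on {a..b} (P f)"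
  obtains Phi where "\<And>f x. apply_bcontfun (Phi f) x = P (apply_bcontfun f) (clamp a b x)"
proof -
  have "\<forall>f::real \<Rightarrow>\<^sub>C 'a. \<exists>g::real \<Rightarrow>\<^sub>C 'a. \<forall>x. g x = P f (clamp a b x)"
  proof
    fix f :: "real \<Rightarrow>\<^sub>C 'a"
    have "continuous_on (cbox a b) (P f)" using assms[of f] by simp
    then obtain g :: "real \<Rightarrow>\<^sub>C 'a" where "\<And>x. g x = P f (clamp a b x)"
      by (rule continuous_on_cbox_bcontfunE) blast
    then show "\<exists>g::real \<Rightarrow>\<^sub>C 'a. \<forall>x. g x = P f (clamp a b x)" by blast
  qed
  then show ?thesis using that by metis
qed

theorem lipschitz_ivp_unique_solution:
  fixes H :: "'a::banach \<Rightarrow> real \<Rightarrow> 'a"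
  assumes T: "0 \<le> T"
    and lip: "\<And>t. t \<in> {0..T} \<Longrightarrow> L-lipschitz_on UNIV (\<lambda>u. H u t)"
    and cont: "\<And>u. continuous_on {0..T} (H u)"
  obtains y where "solves_ivp_on H UNIV {0..T} y0 y"
    and "\<And>z t. solves_ivp_on H UNIV {0..T} y0 z \<Longrightarrow> t \<in> {0..T} \<Longrightarrow> z t = y t"
proof -
  have L: "0 \<le> L" using lip[of 0] T by (auto intro: lipschitz_on_nonneg)
  define K where "K = 2 * L + 1"
  have K: "0 < K" "L / K \<le> 1 / 2" using L by (auto simp: K_def field_simps)
  let ?P = "weighted_picard_op H K y0"
  obtain Phi where Phi: "\<And>f x. apply_bcontfun (Phi f) x = ?P (apply_bcontfun f) (clamp 0 T x)"
    using bcontfun_clamp_extension continuous_on_weighted_picard_op[OF lip cont] by blast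
  have "dist (Phi f) (Phi g) \<le> 1 / 2 * dist f g" for f g
  proof (rule dist_bound)
    fix x
    have "norm (?P f (clamp 0 T x) - ?P g (clamp 0 T x)) \<le> L / K * dist f g"
      using T dist_bounded[of f _ g]
      by (intro weighted_picard_op_contraction[OF lip cont K(1)] clamp_real_in_interval)
        (auto simp: dist_norm)
    also have "\<dots> \<le> 1 / 2 * dist f g"
      using K(2) zero_le_dist by (rule mult_right_mono)
    finally show "dist (Phi f x) (Phi g x) \<le> 1 / 2 * dist f g"
      by (simp add: Phi dist_norm)
  qed
  then have "\<exists>!phi. Phi phi = phi"
    by (intro banach_fix_type[of "1/2"]) auto
  then obtain phi where phi: "Phi phi = phi" and phi_unique: "\<And>psi. Phi psi = psi \<Longrightarrow> psi = phi"
    by metis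
  define y where "y t = exp (K * t) *\<^sub>R phi t" for t
  have y_eq: "y t = y0 + integral {0..t} (\<lambda>s. H (y s) s)" if "t \<in> {0..T}" for t
  proof -
    have "phi t = ?P phi t" using Phi[of phi t] phi that by simp
    then show ?thesis unfolding y_def weighted_picard_op_def by (simp add: exp_minus)
  qed
  have y_cont: "continuous_on {0..T} y" unfolding y_def by (intro continuous_intros) auto
  show ?thesis
  proof
    show "solves_ivp_on H UNIV {0..T} y0 y"
      using T y_cont continuous_on_lipschitz_field[OF lip cont y_cont] y_eq
      by (rule integral_equation_solves_ivp_on)
    fix z t assume z: "solves_ivp_on H UNIV {0..T} y0 z" and t: "t \<in> {0..T}"
    have "continuous_on (cbox 0 T) (\<lambda>t. exp (-(K * t)) *\<^sub>R z t)"
      using solves_ivp_on_continuous_on[OF z] by (auto intro!: continuous_intros)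
    then obtain psi :: "real \<Rightarrow>\<^sub>C 'a"
      where psi: "\<And>x. x \<in> cbox 0 T \<Longrightarrow> psi x = exp (-(K * x)) *\<^sub>R z x"
        and psi_clamp: "\<And>x. psi x = exp (-(K * clamp 0 T x)) *\<^sub>R z (clamp 0 T x)"
      by (rule continuous_on_cbox_bcontfunE) blast
    have "Phi psi = psi"
    proof (rule bcontfun_eqI)
      fix x
      define s where "s = clamp 0 T x"
      have s: "s \<in> {0..T}" unfolding s_def using T by (rule clamp_real_in_interval)
      have "integral {0..s} (\<lambda>r. H (exp (K * r) *\<^sub>R psi r) r) = integral {0..s} (\<lambda>r. H (z r) r)"
        by (rule integral_cong) (use s in \<open>auto simp: psi exp_minus\<close>)
      also have "y0 + \<dots> = z s"
        using solves_ivp_on_integral_equation[OF z s] by simp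
      finally show "Phi psi x = psi x"
        by (simp add: Phi psi_clamp weighted_picard_op_def s_def[symmetric])
    qed
    then have "psi t = phi t" by (metis phi_unique)
    then show "z t = y t" using psi[of t] t by (simp add: y_def exp_minus)
  qed
qed

section \<open>Lipschitz estimates\<close>

lemma lipschitz_on_fst: "1-lipschitz_on U fst"
  by (rule lipschitz_onI) (auto intro: dist_fst_le)

lemma lipschitz_on_snd: "1-lipschitz_on U snd"
  by (rule lipschitz_onI) (auto intro: dist_snd_le)

lemma lipschitz_on_scaleR_bounded:
  fixes f :: "'a::metric_space \<Rightarrow> real" and g :: "'a \<Rightarrow> 'b::real_normed_vector"
  assumes f: "C-lipschitz_on U f" and g: "D-lipschitz_on U g"
    and f_le: "\<And>x. x \<in> U \<Longrightarrow> \<bar>f x\<bar> \<le> K" and g_le: "\<And>x. x \<in> U \<Longrightarrow> norm (g x) \<le> M"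
    and "0 \<le> K" "0 \<le> M"
  shows "(K * D + M * C)-lipschitz_on U (\<lambda>x. f x *\<^sub>R g x)"
proof (rule lipschitz_onI)
  fix x y assume x: "x \<in> U" and y: "y \<in> U"
  have "f x *\<^sub>R g x - f y *\<^sub>R g y = f x *\<^sub>R (g x - g y) + (f x - f y) *\<^sub>R g y"
    by (simp add: algebra_simps)
  then have "dist (f x *\<^sub>R g x) (f y *\<^sub>R g y) \<le> \<bar>f x\<bar> * dist (g x) (g y) + dist (f x) (f y) * norm (g y)"
    by (metis dist_norm dist_real_def norm_scaleR norm_triangle_ineq)
  also have "\<dots> \<le> K * (D * dist x y) + (C * dist x y) * M"
    using x y f_le g_le \<open>0 \<le> K\<close> lipschitz_onD[OF f x y] lipschitz_onD[OF g x y]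
      lipschitz_on_nonneg[OF f] lipschitz_on_nonneg[OF g]
    by (intro add_mono mult_mono) auto
  finally show "dist (f x *\<^sub>R g x) (f y *\<^sub>R g y) \<le> (K * D + M * C) * dist x y"
    by (simp add: algebra_simps)
qed (use assms lipschitz_on_nonneg[OF f] lipschitz_on_nonneg[OF g] in auto)

definition radial_retraction :: "'a::real_normed_vector \<Rightarrow> 'a" where
  "radial_retraction v = v /\<^sub>R max 1 (norm v)"

lemma norm_radial_retraction_le: "norm (radial_retraction v) \<le> 1"
  by (simp add: radial_retraction_def field_simps)

lemma radial_retraction_eq_self: "norm v \<le> 1 \<Longrightarrow> radial_retraction v = v"
  by (simp add: radial_retraction_def)

lemma lipschitz_on_radial_retraction: "2-lipschitz_on U radial_retraction"
proof (rule lipschitz_onI)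
  fix u v :: 'a
  define mu where "mu = max 1 (norm u)"
  define mv where "mv = max 1 (norm v)"
  have mu: "1 \<le> mu" and mv: "1 \<le> mv" and nv: "norm v \<le> mv" by (auto simp: mu_def mv_def)
  have dm: "\<bar>mv - mu\<bar> \<le> norm (u - v)"
  proof -
    have "\<bar>mv - mu\<bar> \<le> \<bar>norm v - norm u\<bar>"
      by (simp add: mu_def mv_def abs_le_iff max_def) linarith
    also have "\<dots> \<le> norm (u - v)" by (metis norm_minus_commute norm_triangle_ineq3)
    finally show ?thesis .
  qed
  have "radial_retraction u - radial_retraction v = (1 / mu) *\<^sub>R (u - v) + (1 / mu - 1 / mv) *\<^sub>R v"
    by (simp add: radial_retraction_def mu_def mv_def algebra_simps inverse_eq_divide)
  then have "norm (radial_retraction u - radial_retraction v)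
      \<le> norm ((1 / mu) *\<^sub>R (u - v)) + norm ((1 / mu - 1 / mv) *\<^sub>R v)"
    by (metis norm_triangle_ineq)
  also have "\<dots> \<le> norm (u - v) + norm (u - v)"
  proof (rule add_mono)
    have "norm ((1 / mu) *\<^sub>R (u - v)) = (1 / mu) * norm (u - v)" using mu by simp
    also have "\<dots> \<le> 1 * norm (u - v)" using mu by (intro mult_right_mono) auto
    finally show "norm ((1 / mu) *\<^sub>R (u - v)) \<le> norm (u - v)" by simp
    have "norm ((1 / mu - 1 / mv) *\<^sub>R v) = \<bar>mv - mu\<bar> / mu * (norm v / mv)"
      using mu mv by (simp add: field_simps)
    also have "\<dots> \<le> \<bar>mv - mu\<bar> * 1"
      using mu mv nv by (intro mult_mono) (auto simp: divide_le_eq mult_le_cancel_left1)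
    finally show "norm ((1 / mu - 1 / mv) *\<^sub>R v) \<le> norm (u - v)" using dm by simp
  qed
  finally show "dist (radial_retraction u) (radial_retraction v) \<le> 2 * dist u v"
    by (simp add: dist_norm)
qed simp

section \<open>The Hopf map\<close>

lemma Red_space_subset_Pi_map_image: "Red_space \<subseteq> Pi_map ` MB_space"
proof
  fix Y assume "Y \<in> Red_space"
  then obtain A B x y z where Y: "Y = (A, B, x, y, z)" and sph: "x\<^sup>2 + y\<^sup>2 + z\<^sup>2 = 1"
    by (auto simp: Red_space_def)
  have "\<exists>C1 C2. (cmod C1)\<^sup>2 + (cmod C2)\<^sup>2 = 1 \<and> hopf C1 C2 = (x, y, z)"
  proof (cases "z = -1")
    case True
    then have "x = 0" "y = 0" using sph by (auto simp: add_nonneg_eq_0_iff)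
    with True show ?thesis by (intro exI[of _ 0] exI[of _ 1]) (simp add: hopf_def)
  next
    case False
    have "z\<^sup>2 \<le> 1" using sph by (metis add_nonneg_nonneg le_add_same_cancel2 zero_le_power2)
    then have z: "1 + z > 0" using False by (auto simp: abs_square_le_1)
    define s where "s = sqrt ((1 + z) / 2)"
    have s: "s > 0" "s\<^sup>2 = (1 + z) / 2" using z by (auto simp: s_def)
    define C2 where "C2 = Complex (x / (2 * s)) (y / (2 * s))"
    have "(cmod C2)\<^sup>2 = (x\<^sup>2 + y\<^sup>2) / (4 * s\<^sup>2)"
      by (simp add: C2_def cmod_power2 power_divide add_divide_distrib power_mult_distrib)
    also have "\<dots> = (1 + z) * (1 - z) / (2 * (1 + z))"
    proof -
      have "x\<^sup>2 + y\<^sup>2 = (1 + z) * (1 - z)" using sph by (simp add: algebra_simps power2_eq_square)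
      moreover have "4 * s\<^sup>2 = 2 * (1 + z)" using s(2) by simp
      ultimately show ?thesis by (simp only:)
    qed
    also have "\<dots> = (1 - z) / 2"
      using z by (simp add: field_simps)
    finally have C2: "(cmod C2)\<^sup>2 = (1 - z) / 2" .
    have "(cmod (complex_of_real s))\<^sup>2 + (cmod C2)\<^sup>2 = 1" "hopf (complex_of_real s) C2 = (x, y, z)"
      using C2 s by (auto simp: hopf_def C2_def field_simps)
    then show ?thesis by blast
  qed
  then show "Y \<in> Pi_map ` MB_space"
    unfolding Y by (force simp: MB_space_def Pi_map_def)
qed

lemma Pi_map_has_derivative:
  "(Pi_map has_derivative (\<lambda>(a, b, h1, h2). (a, b,
      2 * Re (cnj h1 * C2 + cnj C1 * h2), 2 * Im (cnj h1 * C2 + cnj C1 * h2),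
      2 * Re (cnj C1 * h1 - cnj C2 * h2)))) (at (A, B, C1, C2))"
proof -
  have Pi_map_eq: "Pi_map = (\<lambda>X. (fst X, fst (snd X),
      2 * (Re (fst (snd (snd X))) * Re (snd (snd (snd X))) + Im (fst (snd (snd X))) * Im (snd (snd (snd X)))),
      2 * (Re (fst (snd (snd X))) * Im (snd (snd (snd X))) - Im (fst (snd (snd X))) * Re (snd (snd (snd X)))),
      Re (fst (snd (snd X))) ^ 2 + Im (fst (snd (snd X))) ^ 2 - Re (snd (snd (snd X))) ^ 2 - Im (snd (snd (snd X))) ^ 2))"
    by (auto simp: fun_eq_iff Pi_map_def hopf_def cmod_power2 split: prod.splits)
  show ?thesis
    unfolding Pi_map_eq
    by (rule derivative_eq_intros refl | simp)+ (auto simp: fun_eq_iff algebra_simps)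
qed

section \<open>The reduced Maxwell--Bloch field\<close>

type_synonym red_state = "real \<times> real \<times> real \<times> real \<times> real"

lemma Red_space_iff_norm: "u \<in> Red_space \<longleftrightarrow> norm (snd (snd u)) = 1"
  by (cases u) (auto simp: Red_space_def norm_Pair ac_simps)

lemma linear_minus_square_le:
  fixes a b x :: real
  assumes "0 < a"
  shows "b * x - a * x\<^sup>2 \<le> b\<^sup>2 / (4 * a)"
proof -
  have "0 \<le> (2 * a * x - b)\<^sup>2" by simp
  then show ?thesis using assms by (simp add: field_simps power2_eq_square)
qed

definition coupling_direction :: "real \<times> real \<times> real \<Rightarrow> red_state" where
  "coupling_direction w = (0, 0, -2 * snd (snd w), 0, 2 * fst w)"

lemma bounded_linear_coupling_direction: "bounded_linear coupling_direction"
  unfolding coupling_direction_def[abs_def] by (intro bounded_linear_intros bounded_linear_minus)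

locale maxwell_bloch =
  fixes Omega sig c hb p w1 w2 :: real and Ap :: "real \<Rightarrow> real"
  assumes Omega_pos: "0 < Omega" and sig_pos: "0 < sig" and c_pos: "0 < c" and hb_pos: "0 < hb"
    and Ap_continuous: "continuous_on {0..} Ap"
begin

definition omega :: real where "omega = w2 - w1"

definition q :: real where "q = omega * p"

text \<open>The coefficient \<open>a(t) / hb\<close> of the Bloch equations, \<open>a = q / c * (A + Ap)\<close>.\<close>

definition coupling :: "real \<Rightarrow> real \<Rightarrow> real" where
  "coupling A t = q * (A + Ap t) / (c * hb)"

fun coupled_field :: "real \<Rightarrow> red_state \<Rightarrow> red_state" where
  "coupled_field k (A, B, x, y, z) =
     (B, - (Omega\<^sup>2) * A - sig * B + c * q * y, omega * y - 2 * k * z, - (omega * x), 2 * k * x)"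

definition red_field :: "red_state \<Rightarrow> real \<Rightarrow> red_state" where
  "red_field u t = coupled_field (coupling (fst u) t) u"

lemma mb_field_eq:
  fixes C1 C2 :: complex
  shows "mb_field Omega sig c hb p w1 w2 Ap (A, B, C1, C2) t =
     (B, - (Omega\<^sup>2) * A - sig * B + c * (2 * q * Im (cnj C1 * C2)),
      - \<i> * of_real w1 * C1 + of_real (coupling A t) * C2,
      - \<i> * of_real w2 * C2 - of_real (coupling A t) * C1)"
proof -
  have "complex_of_real c \<noteq> 0" "complex_of_real hb \<noteq> 0" using c_pos hb_pos by auto
  then show ?thesis
    unfolding mb_field_def Let_def by (simp add: q_def omega_def coupling_def field_simps)
qed

lemma pushforward_eq_red_field:
  assumes F: "is_pushforward Omega sig c hb p w1 w2 Ap F" and Y: "Y \<in> Red_space" and t: "0 \<le> t"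
  shows "F Y t = red_field Y t"
proof -
  obtain A B C1 C2 where X: "(A, B, C1, C2) \<in> MB_space" and Y_eq: "Y = Pi_map (A, B, C1, C2)"
    using Red_space_subset_Pi_map_image Y by force
  obtain D where D: "(Pi_map has_derivative D) (at (A, B, C1, C2))"
    and F_eq: "F Y t = D (mb_field Omega sig c hb p w1 w2 Ap (A, B, C1, C2) t)"
    using F X t Y_eq unfolding is_pushforward_def by metis
  note F_eq
  also have "D (mb_field Omega sig c hb p w1 w2 Ap (A, B, C1, C2) t) = red_field Y t"
    unfolding has_derivative_unique[OF D Pi_map_has_derivative] mb_field_eq Y_eq
    by (simp add: Pi_map_def hopf_def red_field_def omega_def cmod_power2 algebra_simps)
      (simp add: power2_eq_square algebra_simps)
  finally show ?thesis .
qed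

lemma reduced_solution_iff_solves_ivp_on:
  assumes "is_pushforward Omega sig c hb p w1 w2 Ap F"
  shows "reduced_solution F Y Y0 \<longleftrightarrow> solves_ivp_on red_field Red_space {0..} Y0 Y"
proof -
  have "Y t \<in> Red_space \<and> (Y has_vector_derivative F (Y t) t) (at t within {0..}) \<longleftrightarrow>
      Y t \<in> Red_space \<and> (Y has_vector_derivative red_field (Y t) t) (at t within {0..})" if "0 \<le> t" for t
    using pushforward_eq_red_field[OF assms _ that, of "Y t"] by auto
  then show ?thesis by (simp add: reduced_solution_def solves_ivp_on_def Ball_def)
qed

text \<open>The truncation acts only through the coupling and the Bloch vector: the latter is retracted
  as a whole, so the \<open>(x, y, z)\<close>-part of the field stays orthogonal to \<open>(x, y, z)\<close> and the
  \<open>B\<close>-component still sees \<open>|y| \<le> 1\<close>.\<close>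

definition trunc_field :: "real \<Rightarrow> red_state \<Rightarrow> real \<Rightarrow> red_state" where
  "trunc_field R u t =
     coupled_field (coupling (clamp (-R) R (fst u)) t) (fst u, fst (snd u), radial_retraction (snd (snd u)))"

lemma trunc_field_eq_red_field:
  assumes "u \<in> Red_space" "\<bar>fst u\<bar> \<le> R"
  shows "trunc_field R u t = red_field u t"
proof -
  have "clamp (-R) R (fst u) = fst u" using assms(2) by (intro clamp_cancel_cbox) auto
  moreover have "radial_retraction (snd (snd u)) = snd (snd u)"
    using assms(1) by (simp add: Red_space_iff_norm radial_retraction_eq_self)
  ultimately show ?thesis by (simp add: trunc_field_def red_field_def)
qed

lemma coupled_field_eq_linear_plus_coupling:
  "coupled_field k (A, B, w) = coupled_field 0 (A, B, w) + k *\<^sub>R coupling_direction w"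
  by (cases w) (simp add: coupling_direction_def algebra_simps)

lemma bounded_linear_coupled_field_0: "bounded_linear (coupled_field 0)"
proof -
  have "coupled_field 0 = (\<lambda>u. (fst (snd u),
      - (Omega\<^sup>2) * fst u - sig * fst (snd u) + c * q * fst (snd (snd (snd u))),
      omega * fst (snd (snd (snd u))), - (omega * fst (snd (snd u))), 0))"
    by (auto simp: fun_eq_iff)
  then show ?thesis by (simp only:) (intro bounded_linear_intros bounded_linear_minus)
qed

lemma lipschitz_on_truncated_coupling:
  "\<bar>q / (c * hb)\<bar>-lipschitz_on UNIV (\<lambda>u::red_state. coupling (clamp (-R) R (fst u)) t)"
proof (rule lipschitz_onI)
  fix u v :: red_state
  have "dist (coupling (clamp (-R) R (fst u)) t) (coupling (clamp (-R) R (fst v)) t)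
      = \<bar>q / (c * hb)\<bar> * dist (clamp (-R) R (fst u)) (clamp (-R) R (fst v))"
    by (simp add: coupling_def dist_real_def abs_mult flip: right_diff_distrib diff_divide_distrib)
  also have "\<dots> \<le> \<bar>q / (c * hb)\<bar> * dist u v"
    by (intro mult_left_mono order_trans[OF dist_clamps_le_dist_args dist_fst_le]) auto
  finally show "dist (coupling (clamp (-R) R (fst u)) t) (coupling (clamp (-R) R (fst v)) t)
      \<le> \<bar>q / (c * hb)\<bar> * dist u v" .
qed simp

lemma abs_truncated_coupling_le:
  assumes "0 \<le> R" "\<bar>Ap t\<bar> \<le> P"
  shows "\<bar>coupling (clamp (-R) R a) t\<bar> \<le> \<bar>q / (c * hb)\<bar> * (R + P)"
proof -
  have "\<bar>clamp (-R) R a + Ap t\<bar> \<le> R + P"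
    using assms clamp_real_in_interval[of "-R" R a] by (auto simp: abs_le_iff)
  then show ?thesis
    unfolding coupling_def by (simp add: abs_mult mult_left_mono divide_right_mono)
qed

lemma trunc_field_lipschitz:
  assumes "0 \<le> R"
  obtains L where "\<And>t. t \<in> {0..T} \<Longrightarrow> L-lipschitz_on UNIV (\<lambda>u. trunc_field R u t)"
proof -
  have "bounded (Ap ` {0..T})"
    using Ap_continuous by (intro compact_imp_bounded compact_continuous_image) (auto elim: continuous_on_subset)
  then obtain P where P: "\<And>t. t \<in> {0..T} \<Longrightarrow> \<bar>Ap t\<bar> \<le> P"
    unfolding bounded_iff by (metis image_eqI real_norm_def)
  define retr where "retr u = (fst u, fst (snd u), radial_retraction (snd (snd u)))" for u :: red_state
  obtain Cr where retr: "Cr-lipschitz_on UNIV retr"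
    using lipschitz_on_Pair[OF lipschitz_on_fst lipschitz_on_Pair[OF
      lipschitz_on_compose2[OF lipschitz_on_snd lipschitz_on_fst]
      lipschitz_on_compose2[OF lipschitz_on_compose2[OF lipschitz_on_snd lipschitz_on_snd]
        lipschitz_on_radial_retraction]]]
    unfolding retr_def[abs_def] by blast
  obtain Blin where lin: "Blin-lipschitz_on UNIV (coupled_field 0)"
    using bounded_linear_coupled_field_0 by (rule bounded_linear.lipschitz_boundE)
  obtain CJ where J: "CJ-lipschitz_on UNIV (\<lambda>u::red_state. coupling_direction (radial_retraction (snd (snd u))))"
  proof -
    obtain BJ where "BJ-lipschitz_on UNIV coupling_direction"
      using bounded_linear_coupling_direction by (rule bounded_linear.lipschitz_boundE)
    then show ?thesis
      using lipschitz_on_compose2[OF lipschitz_on_compose2[OF lipschitz_on_compose2[OF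
          lipschitz_on_snd lipschitz_on_snd] lipschitz_on_radial_retraction] lipschitz_on_subset[OF _ subset_UNIV]]
        that by blast
  qed
  obtain MJ where MJ: "0 \<le> MJ" "\<And>w. norm (coupling_direction w) \<le> norm w * MJ"
    using bounded_linear.nonneg_bounded[OF bounded_linear_coupling_direction] by blast
  have J_le: "norm (coupling_direction (radial_retraction w)) \<le> MJ" for w
  proof -
    have "norm (coupling_direction (radial_retraction w)) \<le> norm (radial_retraction w) * MJ"
      by (rule MJ(2))
    also have "\<dots> \<le> 1 * MJ"
      using norm_radial_retraction_le MJ(1) by (rule mult_right_mono)
    finally show ?thesis by simp
  qed
  have split: "trunc_field R u t = coupled_field 0 (retr u)
      + coupling (clamp (-R) R (fst u)) t *\<^sub>R coupling_direction (radial_retraction (snd (snd u)))" for u t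
    unfolding trunc_field_def retr_def by (rule coupled_field_eq_linear_plus_coupling)
  define Q where "Q = \<bar>q / (c * hb)\<bar>"
  show ?thesis
  proof (rule that)
    fix t assume t: "t \<in> {0..T}"
    have "(Blin * Cr + (Q * (R + P) * CJ + MJ * Q))-lipschitz_on UNIV
        (\<lambda>u. coupled_field 0 (retr u)
          + coupling (clamp (-R) R (fst u)) t *\<^sub>R coupling_direction (radial_retraction (snd (snd u))))"
      using P[OF t] MJ(1) J_le \<open>0 \<le> R\<close> unfolding Q_def
      by (intro lipschitz_on_add lipschitz_on_compose2[OF retr lipschitz_on_subset[OF lin subset_UNIV]]
          lipschitz_on_scaleR_bounded[OF lipschitz_on_truncated_coupling J] abs_truncated_coupling_le) auto
    then show "(Blin * Cr + (Q * (R + P) * CJ + MJ * Q))-lipschitz_on UNIV (\<lambda>u. trunc_field R u t)"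
      by (simp only: split)
  qed
qed

lemma continuous_on_trunc_field: "continuous_on {0..T} (trunc_field R u)"
proof -
  have Ap: "continuous_on {0..T} Ap" using Ap_continuous by (rule continuous_on_subset) auto
  have "continuous_on {0..T} (\<lambda>t. coupled_field (coupling a t) w)" for a w
    unfolding coupling_def using c_pos hb_pos by (cases w) (auto intro!: continuous_intros Ap)
  then show ?thesis
    unfolding trunc_field_def[abs_def] .
qed

lemma trunc_field_ivp_unique_solution:
  assumes "0 \<le> T" "0 \<le> R"
  obtains Y where "solves_ivp_on (trunc_field R) UNIV {0..T} Y0 Y"
    and "\<And>Z t. solves_ivp_on (trunc_field R) UNIV {0..T} Y0 Z \<Longrightarrow> t \<in> {0..T} \<Longrightarrow> Z t = Y t"
proof -
  obtain L where "\<And>t. t \<in> {0..T} \<Longrightarrow> L-lipschitz_on UNIV (\<lambda>u. trunc_field R u t)"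
    using trunc_field_lipschitz[OF \<open>0 \<le> R\<close>] by blast
  from lipschitz_ivp_unique_solution[OF \<open>0 \<le> T\<close> this continuous_on_trunc_field] that
  show ?thesis by blast
qed

lemma trunc_field_solution_in_Red_space:
  assumes Y: "solves_ivp_on (trunc_field R) UNIV {0..T} Y0 Y" and Y0: "Y0 \<in> Red_space"
    and t: "t \<in> {0..T}"
  shows "Y t \<in> Red_space"
proof -
  define \<Phi> where "\<Phi> u = snd (snd u) \<bullet> snd (snd u)" for u :: red_state
  have "(\<Phi> has_derivative (\<lambda>h. 2 * (snd (snd u) \<bullet> snd (snd h)))) (at u)" for u
    unfolding \<Phi>_def[abs_def] by (auto intro!: derivative_eq_intros simp: inner_commute)
  from solves_ivp_on_mean_value[OF Y t this]
  obtain s where "\<Phi> (Y t) - \<Phi> Y0 = 2 * (snd (snd (Y s)) \<bullet> snd (snd (trunc_field R (Y s) s))) * t"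
    by blast
  moreover have "snd (snd u) \<bullet> snd (snd (trunc_field R u s)) = 0" for u s
    by (cases u) (simp add: trunc_field_def radial_retraction_def algebra_simps)
  ultimately have "\<Phi> (Y t) = \<Phi> Y0" by simp
  with Y0 show ?thesis by (simp add: Red_space_iff_norm \<Phi>_def norm_eq_1)
qed

definition energy :: "red_state \<Rightarrow> real" where
  "energy u = Omega\<^sup>2 * (fst u)\<^sup>2 + (fst (snd u))\<^sup>2"

lemma trunc_field_solution_energy_le:
  assumes Y: "solves_ivp_on (trunc_field R) UNIV {0..T} Y0 Y" and t: "t \<in> {0..T}"
  shows "energy (Y t) \<le> energy Y0 + (c * q)\<^sup>2 / (2 * sig) * t"
proof -
  have "(energy has_derivative (\<lambda>h. 2 * Omega\<^sup>2 * fst u * fst h + 2 * fst (snd u) * fst (snd h))) (at u)" for u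
    unfolding energy_def[abs_def] by (auto intro!: derivative_eq_intros simp: fun_eq_iff)
  from solves_ivp_on_mean_value[OF Y t this]
  obtain s where s: "energy (Y t) - energy Y0 =
      (2 * Omega\<^sup>2 * fst (Y s) * fst (trunc_field R (Y s) s)
       + 2 * fst (snd (Y s)) * fst (snd (trunc_field R (Y s) s))) * t"
    by blast
  have rate: "2 * Omega\<^sup>2 * fst u * fst (trunc_field R u s) + 2 * fst (snd u) * fst (snd (trunc_field R u s))
      \<le> (c * q)\<^sup>2 / (2 * sig)" for u s
  proof -
    obtain A B w where u: "u = (A, B, w)" by (cases u)
    define y where "y = fst (snd (radial_retraction w))"
    have "\<bar>y\<bar> \<le> 1"
      using norm_fst_le[of "snd (radial_retraction w)" "fst (radial_retraction w)"]
        norm_snd_le[of "snd (radial_retraction w)" "fst (radial_retraction w)"]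
        norm_fst_le[of y "snd (snd (radial_retraction w))"] norm_radial_retraction_le[of w]
      by (simp add: y_def)
    have "2 * Omega\<^sup>2 * fst u * fst (trunc_field R u s) + 2 * fst (snd u) * fst (snd (trunc_field R u s))
        = (2 * c * q * y) * B - (2 * sig) * B\<^sup>2"
      by (cases "radial_retraction w") (simp add: u y_def trunc_field_def algebra_simps power2_eq_square)
    also have "\<dots> \<le> (2 * c * q * y)\<^sup>2 / (4 * (2 * sig))"
      using sig_pos by (intro linear_minus_square_le) simp
    also have "\<dots> = (c * q)\<^sup>2 / (2 * sig) * y\<^sup>2"
      by (simp add: power_mult_distrib)
    also have "\<dots> \<le> (c * q)\<^sup>2 / (2 * sig) * 1"
      using \<open>\<bar>y\<bar> \<le> 1\<close> sig_pos by (intro mult_left_mono) (auto simp: abs_square_le_1)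
    finally show ?thesis by simp
  qed
  have "energy (Y t) - energy Y0 \<le> (c * q)\<^sup>2 / (2 * sig) * t"
    unfolding s using rate t by (intro mult_right_mono) auto
  then show ?thesis by simp
qed

lemma red_field_ivp_exists:
  assumes T: "0 \<le> T" and Y0: "Y0 \<in> Red_space"
  shows "\<exists>Y. solves_ivp_on red_field Red_space {0..T} Y0 Y"
proof -
  define E where "E = energy Y0 + (c * q)\<^sup>2 / (2 * sig) * T"
  have E: "0 \<le> E" using T sig_pos by (simp add: E_def energy_def)
  define R where "R = sqrt (E / Omega\<^sup>2)"
  have R: "0 \<le> R" using E by (simp add: R_def)
  obtain Y where Y: "solves_ivp_on (trunc_field R) UNIV {0..T} Y0 Y"
    using trunc_field_ivp_unique_solution[OF T R] by blast
  have on_sphere: "Y t \<in> Red_space" if "t \<in> {0..T}" for t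
    using trunc_field_solution_in_Red_space[OF Y Y0 that] .
  have A_le: "\<bar>fst (Y t)\<bar> \<le> R" if t: "t \<in> {0..T}" for t
  proof -
    have "Omega\<^sup>2 * (fst (Y t))\<^sup>2 \<le> energy (Y t)" by (simp add: energy_def)
    also have "\<dots> \<le> E"
    proof -
      have "(c * q)\<^sup>2 / (2 * sig) * t \<le> (c * q)\<^sup>2 / (2 * sig) * T"
        using t sig_pos by (intro mult_left_mono) auto
      then show ?thesis using trunc_field_solution_energy_le[OF Y t] unfolding E_def by linarith
    qed
    finally have "(fst (Y t))\<^sup>2 \<le> E / Omega\<^sup>2" using Omega_pos by (simp add: field_simps)
    then have "sqrt ((fst (Y t))\<^sup>2) \<le> R" unfolding R_def by (rule real_sqrt_le_mono)
    then show ?thesis by simp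
  qed
  have "solves_ivp_on red_field UNIV {0..T} Y0 Y"
    using Y by (subst solves_ivp_on_cong[where H' = "trunc_field R"])
      (auto simp: trunc_field_eq_red_field on_sphere A_le)
  with on_sphere show ?thesis by (auto simp: solves_ivp_on_def)
qed

lemma red_field_ivp_unique:
  assumes Y: "solves_ivp_on red_field Red_space {0..T} Y0 Y"
    and Z: "solves_ivp_on red_field Red_space {0..T} Y0 Z" and t: "t \<in> {0..T}"
  shows "Y t = Z t"
proof -
  have "compact (Y ` {0..T} \<union> Z ` {0..T})"
    using Y Z by (intro compact_Un compact_continuous_image) (auto dest: solves_ivp_on_continuous_on)
  then obtain R where R: "\<And>u. u \<in> Y ` {0..T} \<union> Z ` {0..T} \<Longrightarrow> norm u \<le> R"
    by (meson bounded_iff compact_imp_bounded)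
  have T: "0 \<le> T" and "0 \<le> R" using t R[of "Y 0"] order_trans[OF norm_ge_zero] by auto
  have trunc: "solves_ivp_on (trunc_field R) UNIV {0..T} Y0 W"
    if W: "solves_ivp_on red_field Red_space {0..T} Y0 W" and W_le: "\<And>s. s \<in> {0..T} \<Longrightarrow> norm (W s) \<le> R" for W
  proof -
    have "\<bar>fst (W s)\<bar> \<le> R" if "s \<in> {0..T}" for s
      using norm_fst_le[of "fst (W s)" "snd (W s)"] W_le[OF that] by simp
    then have "solves_ivp_on (trunc_field R) Red_space {0..T} Y0 W"
      using W by (subst solves_ivp_on_cong[where H' = red_field])
        (auto simp: trunc_field_eq_red_field solves_ivp_on_def)
    then show ?thesis by (rule solves_ivp_on_mono) auto
  qed
  obtain U where U: "\<And>W s. solves_ivp_on (trunc_field R) UNIV {0..T} Y0 W \<Longrightarrow> s \<in> {0..T} \<Longrightarrow> W s = U s"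
    using trunc_field_ivp_unique_solution[OF T \<open>0 \<le> R\<close>] by blast
  have "Y t = U t" using R by (intro U[OF trunc[OF Y] t]) blast
  moreover have "Z t = U t" using R by (intro U[OF trunc[OF Z] t]) blast
  ultimately show ?thesis by simp
qed

end

theorem lemma3p1:
  fixes Omega sig c hb p w1 w2 :: real
    and Ap :: "real \<Rightarrow> real"
    and F :: "real \<times> real \<times> real \<times> real \<times> real \<Rightarrow> real \<Rightarrow> real \<times> real \<times> real \<times> real \<times> real"
  assumes "Omega > 0" and "sig > 0" and "c > 0" and "hb > 0" and "p > 0" and "w1 < w2"
    and "continuous_on {0..} Ap"
    and "is_pushforward Omega sig c hb p w1 w2 Ap F"
  shows "\<forall>Y0\<in>Red_space. \<exists>Y. reduced_solution F Y Y0 \<and>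
           (\<forall>Z. reduced_solution F Z Y0 \<longrightarrow> (\<forall>t\<ge>0. Z t = Y t))"
proof
  fix Y0 assume Y0: "Y0 \<in> Red_space"
  interpret maxwell_bloch Omega sig c hb p w1 w2 Ap
    using assms by unfold_locales auto
  note reduced_iff = reduced_solution_iff_solves_ivp_on[OF assms(8)]
  obtain Y where Y: "solves_ivp_on red_field Red_space {0..} Y0 Y"
  proof (rule solves_ivp_on_half_line[of red_field Red_space Y0])
    show "\<exists>Y. solves_ivp_on red_field Red_space {0..T} Y0 Y" if "0 \<le> T" for T
      using that Y0 by (rule red_field_ivp_exists)
    show "Y t = Z t" if "solves_ivp_on red_field Red_space {0..T} Y0 Y"
      "solves_ivp_on red_field Red_space {0..T} Y0 Z" "t \<in> {0..T}" for T Y Z t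
      using that by (rule red_field_ivp_unique)
  qed (rule that)
  show "\<exists>Y. reduced_solution F Y Y0 \<and> (\<forall>Z. reduced_solution F Z Y0 \<longrightarrow> (\<forall>t\<ge>0. Z t = Y t))"
  proof (intro exI conjI allI impI)
    show "reduced_solution F Y Y0" using Y reduced_iff by simp
    fix Z and t :: real assume "reduced_solution F Z Y0" "0 \<le> t"
    then have "solves_ivp_on red_field Red_space {0..t} Y0 Z" "solves_ivp_on red_field Red_space {0..t} Y0 Y"
      using Y by (auto simp: reduced_iff elim!: solves_ivp_on_mono)
    then show "Z t = Y t" using \<open>0 \<le> t\<close> by (intro red_field_ivp_unique) auto
  qed
qed

end
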